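(* Let $\theta\in(\mathbb{R}^N_{>0})^R$ and $w\in\mathbb{R}^N_{>0}$ be positive vectors. Let $y\in\mathcal{B}$ and let $z$ be a point of the base polytope of the submodular function $F=\sum_{r\in[R]}F_r$. Then there exists $\xi\in\mathcal{B}$ such that $A\xi=z$ and $$\|\xi-y\|_{2,\theta}\le\sqrt{\tfrac{\|\theta\|_{1,\infty}}{2}}\,\|Ay-z\|_1 .$$ Moreover, $\|\xi-y\|_{2,\theta}\le\sqrt{\tfrac{\|\theta\|_{1,\infty}\,\|w^{-1}\|_1}{2}}\,\|Ay-z\|_{2,w}$, where $w^{-1}=(w_1^{-1},\dots,w_N^{-1})$.
   Context: Let $N,R$ be positive integers and $[N]=\{1,\dots,N\}$. For each $r\in[R]$, $F_r:2^{[N]}\to\mathbb{R}$ is a submodular function with $F_r(\emptyset)=0$. For $z\in\mathbb{R}^N$ and $S\subseteq[N]$, $z(S)=\sum_{i\in S}z_i$. The base polytope of a normalized submodular $G$ on $[N]$ is $\{u\in\mathbb{R}^N: u(S)\le G(S)\ \forall S\subseteq[N],\ u([N])=G([N])\}$; $\mathcal{B}_r$ denotes the base polytope of $F_r$ and $\mathcal{B}=\mathcal{B}_1\times\cdots\times\mathcal{B}_R\subseteq(\mathbb{R}^N)^R$, with elements $y=(y_1,\dots,y_R)$ and $y_{r,i}$ the $i$-th coordinate of $y_r$. The linear map $A:(\mathbb{R}^N)^R\to\mathbb{R}^N$ is $Ay=\sum_{r}y_r$. An element $i\in[N]$ is incident to $F_r$ if there is $S\subseteq[N]\setminus\{i\}$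 with $F_r(S\cup\{i\})\neq F_r(S)$; $S_r$ is the set of elements incident to $F_r$. Assume every $i\in[N]$ lies in at least one $S_r$. For $w\in\mathbb{R}^N_{\ge 0}$, $\|z\|_{2,w}=\sqrt{\sum_i w_iz_i^2}$; for $\theta=(\theta_1,\dots,\theta_R)\in(\mathbb{R}^N_{\ge0})^R$ and $y\in(\mathbb{R}^N)^R$, $\|y\|_{2,\theta}=\sqrt{\sum_r\|y_r\|_{2,\theta_r}^2}$, and $\|\theta\|_{1,\infty}=\sum_{i\in[N]}\max_{r\in[R]:\,i\in S_r}\theta_{r,i}$. *)

theory Defs
  imports Complex_Main
begin

text \<open>Ground set [N] = {1..N}; vectors in R^N are functions nat => real,
  only coordinates in {1..N} matter. Families indexed by r in [R] = {1..R}.\<close>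

definition submodular_on :: "nat \<Rightarrow> (nat set \<Rightarrow> real) \<Rightarrow> bool" where
  "submodular_on N G \<longleftrightarrow>
     (\<forall>S T. S \<subseteq> {1..N} \<longrightarrow> T \<subseteq> {1..N} \<longrightarrow> G (S \<union> T) + G (S \<inter> T) \<le> G S + G T)"

definition setsum_vec :: "(nat \<Rightarrow> real) \<Rightarrow> nat set \<Rightarrow> real" where
  "setsum_vec z S = (\<Sum>i\<in>S. z i)"

definition base_polytope :: "nat \<Rightarrow> (nat set \<Rightarrow> real) \<Rightarrow> (nat \<Rightarrow> real) set" where
  "base_polytope N G = {u. (\<forall>S. S \<subseteq> {1..N} \<longrightarrow> setsum_vec u S \<le> G S)
                              \<and> setsum_vec u {1..N} = G {1..N}}"

definition prod_base :: "nat \<Rightarrow> nat \<Rightarrow> (nat \<Rightarrow> nat set \<Rightarrow> real) \<Rightarrow> (nat \<Rightarrow> nat \<Rightarrow> real) set" where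
  "prod_base N R F = {y. \<forall>r\<in>{1..R}. y r \<in> base_polytope N (F r)}"

definition opA :: "nat \<Rightarrow> (nat \<Rightarrow> nat \<Rightarrow> real) \<Rightarrow> nat \<Rightarrow> real" where
  "opA R y = (\<lambda>i. \<Sum>r\<in>{1..R}. y r i)"

definition incident :: "nat \<Rightarrow> (nat set \<Rightarrow> real) \<Rightarrow> nat \<Rightarrow> bool" where
  "incident N G i \<longleftrightarrow> (\<exists>S. S \<subseteq> {1..N} - {i} \<and> G (S \<union> {i}) \<noteq> G S)"

definition norm1 :: "nat \<Rightarrow> (nat \<Rightarrow> real) \<Rightarrow> real" where
  "norm1 N z = (\<Sum>i\<in>{1..N}. \<bar>z i\<bar>)"

definition norm2w :: "nat \<Rightarrow> (nat \<Rightarrow> real) \<Rightarrow> (nat \<Rightarrow> real) \<Rightarrow> real" where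
  "norm2w N w z = sqrt (\<Sum>i\<in>{1..N}. w i * (z i)\<^sup>2)"

definition norm2theta :: "nat \<Rightarrow> nat \<Rightarrow> (nat \<Rightarrow> nat \<Rightarrow> real) \<Rightarrow> (nat \<Rightarrow> nat \<Rightarrow> real) \<Rightarrow> real" where
  "norm2theta N R \<theta> y = sqrt (\<Sum>r\<in>{1..R}. (norm2w N (\<theta> r) (y r))\<^sup>2)"

definition norm1inf :: "nat \<Rightarrow> nat \<Rightarrow> (nat \<Rightarrow> nat set \<Rightarrow> real) \<Rightarrow> (nat \<Rightarrow> nat \<Rightarrow> real) \<Rightarrow> real" where
  "norm1inf N R F \<theta> = (\<Sum>i\<in>{1..N}. Max {\<theta> r i | r. r \<in> {1..R} \<and> incident N (F r) i})"

end

theory Submission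
  imports Defs "HOL-Analysis.Analysis"
begin

text \<open>Let P be the total positive part of z - Ay, so that the l1-norm of Ay - z is 2P. Consider
  the \<xi> \<in> \<B> whose deficit, the total positive part of z - A\<xi>, is some Q \<le> P, and which moved every
  coordinate i by at most P - Q up and at most P - Q down, summed over r. They form a compact set
  on which the deficit attains its minimum, and the minimum is 0: otherwise the coordinates
  reachable from one of positive deficit by exchanges (moves of \<xi> r between two coordinates that
  keep \<xi> r in its base polytope) would form a set U tight for every \<xi> r, and z(U) \<le> F(U) would
  make the deficit on U nonpositive. So some coordinate of positive deficit is joined to one of
  negative deficit by a simple walk of exchanges, and pushing a small \<epsilon> along it lowers the deficit
  by \<epsilon> while moving each coordinate by at most \<epsilon> each way. The resulting \<xi> has A\<xi> = z, and at each
  coordinate i the sum over r of \<theta> r i (\<xi> r i - y r i)^2 is at most 2P^2 times the largest \<theta> r i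
  with F r incident to i, as the other F r force \<xi> r i = y r i = 0. Summing over i gives the first
  bound; Cauchy-Schwarz turns it into the second.\<close>

section \<open>Tight sets of a base polytope\<close>

definition tight :: "nat \<Rightarrow> (nat set \<Rightarrow> real) \<Rightarrow> (nat \<Rightarrow> real) \<Rightarrow> nat set \<Rightarrow> bool" where
  "tight N G x T \<longleftrightarrow> T \<subseteq> {1..N} \<and> setsum_vec x T = G T"

lemma tight_Un_Int:
  assumes sm: "submodular_on N G" and x: "x \<in> base_polytope N G"
    and S: "tight N G x S" and T: "tight N G x T"
  shows "tight N G x (S \<union> T)" and "tight N G x (S \<inter> T)"
proof -
  have ST: "S \<subseteq> {1..N}" "T \<subseteq> {1..N}" using S T unfolding tight_def by auto
  then have fin: "finite S" "finite T" using finite_subset by auto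
  have "setsum_vec x (S \<union> T) + setsum_vec x (S \<inter> T) = setsum_vec x S + setsum_vec x T"
    unfolding setsum_vec_def using sum.union_inter[OF fin] by simp
  moreover have "G (S \<union> T) + G (S \<inter> T) \<le> G S + G T"
    using sm ST unfolding submodular_on_def by blast
  moreover have "setsum_vec x (S \<union> T) \<le> G (S \<union> T)" "setsum_vec x (S \<inter> T) \<le> G (S \<inter> T)"
    using x ST unfolding base_polytope_def by (simp add: le_infI1)+
  ultimately show "tight N G x (S \<union> T)" "tight N G x (S \<inter> T)"
    using S T ST unfolding tight_def by auto
qed

lemma base_polytope_coord_bounds:
  assumes x: "x \<in> base_polytope N G" and i: "i \<in> {1..N}"
  shows "G {1..N} - G ({1..N} - {i}) \<le> x i" and "x i \<le> G {i}"
proof -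
  have "setsum_vec x {i} \<le> G {i}" using x i unfolding base_polytope_def by auto
  then show "x i \<le> G {i}" by (simp add: setsum_vec_def)
  have "setsum_vec x {1..N} = x i + setsum_vec x ({1..N} - {i})"
    unfolding setsum_vec_def using i by (simp add: sum.remove)
  moreover have "setsum_vec x ({1..N} - {i}) \<le> G ({1..N} - {i})"
    using x unfolding base_polytope_def by auto
  moreover have "setsum_vec x {1..N} = G {1..N}" using x unfolding base_polytope_def by auto
  ultimately show "G {1..N} - G ({1..N} - {i}) \<le> x i" by linarith
qed

lemma base_polytope_nonincident_eq_0:
  assumes x: "x \<in> base_polytope N G" and i: "i \<in> {1..N}" and G0: "G {} = 0"
    and ni: "\<not> incident N G i"
  shows "x i = 0"
proof -
  have "G ({} \<union> {i}) = G {}" "G (({1..N} - {i}) \<union> {i}) = G ({1..N} - {i})"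
    using ni unfolding incident_def by blast+
  moreover have "({1..N} - {i}) \<union> {i} = {1..N}" using i by auto
  ultimately show ?thesis using base_polytope_coord_bounds[OF x i] G0 by simp
qed

lemma tight_avoiding:
  assumes sm: "submodular_on N G" and x: "x \<in> base_polytope N G"
    and fin: "finite Qs" and p: "p \<in> {1..N}"
    and sep: "\<forall>q\<in>Qs. \<exists>T. tight N G x T \<and> p \<in> T \<and> q \<notin> T"
  shows "\<exists>T. tight N G x T \<and> p \<in> T \<and> T \<inter> Qs = {}"
  using fin sep
proof (induction Qs rule: finite_induct)
  case empty
  then show ?case using x p unfolding base_polytope_def tight_def by auto
next
  case (insert q Qs)
  then obtain T1 where T1: "tight N G x T1" "p \<in> T1" "T1 \<inter> Qs = {}" by auto
  obtain T2 where T2: "tight N G x T2" "p \<in> T2" "q \<notin> T2" using insert.prems by auto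
  show ?case using tight_Un_Int(2)[OF sm x T1(1) T2(1)] T1 T2 by (intro exI[of _ "T1 \<inter> T2"]) auto
qed

lemma tight_covering:
  assumes sm: "submodular_on N G" and x: "x \<in> base_polytope N G" and G0: "G {} = 0"
    and fin: "finite W" and WU: "W \<subseteq> U"
    and cov: "\<forall>p\<in>W. \<exists>T. tight N G x T \<and> p \<in> T \<and> T \<subseteq> U"
  shows "\<exists>T. tight N G x T \<and> W \<subseteq> T \<and> T \<subseteq> U"
  using fin WU cov
proof (induction W rule: finite_induct)
  case empty
  then show ?case using G0 by (intro exI[of _ "{}"]) (auto simp: tight_def setsum_vec_def)
next
  case (insert p W)
  then obtain T1 where T1: "tight N G x T1" "W \<subseteq> T1" "T1 \<subseteq> U" by auto
  obtain T2 where T2: "tight N G x T2" "p \<in> T2" "T2 \<subseteq> U" using insert.prems by auto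
  show ?case using tight_Un_Int(1)[OF sm x T1(1) T2(1)] T1 T2 by (intro exI[of _ "T1 \<union> T2"]) auto
qed

lemma tight_if_separated:
  assumes sm: "submodular_on N G" and x: "x \<in> base_polytope N G" and G0: "G {} = 0"
    and U: "U \<subseteq> {1..N}"
    and sep: "\<forall>p\<in>U. \<forall>q\<in>{1..N} - U. \<exists>T. tight N G x T \<and> p \<in> T \<and> q \<notin> T"
  shows "tight N G x U"
proof -
  have "\<exists>T. tight N G x T \<and> p \<in> T \<and> T \<subseteq> U" if p: "p \<in> U" for p
  proof -
    obtain T where "tight N G x T" "p \<in> T" "T \<inter> ({1..N} - U) = {}"
      using tight_avoiding[OF sm x _ _ bspec[OF sep p]] p U by blast
    then show ?thesis unfolding tight_def by blast
  qed
  moreover have "finite U" using U finite_subset by blast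
  ultimately obtain T where "tight N G x T" "U \<subseteq> T" "T \<subseteq> U"
    using tight_covering[OF sm x G0 _ order_refl] by metis
  then show ?thesis by (simp add: subset_antisym)
qed

lemma base_polytope_feasible_direction:
  assumes x: "x \<in> base_polytope N G"
    and tight_dir: "\<And>T. tight N G x T \<Longrightarrow> setsum_vec d T \<le> 0"
    and total: "setsum_vec d {1..N} = 0"
  shows "\<exists>\<delta>>0. \<forall>\<epsilon>. 0 \<le> \<epsilon> \<and> \<epsilon> \<le> \<delta> \<longrightarrow> (\<lambda>i. x i + \<epsilon> * d i) \<in> base_polytope N G"
proof -
  define loose where "loose = {T. T \<subseteq> {1..N} \<and> \<not> tight N G x T}"
  define slack where "slack = (\<lambda>T. (G T - setsum_vec x T) / (1 + \<bar>setsum_vec d T\<bar>))"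
  define \<delta> where "\<delta> = Min (insert 1 (slack ` loose))"
  have fin: "finite loose" unfolding loose_def by (rule finite_subset[of _ "Pow {1..N}"]) auto
  have slack_pos: "slack T > 0" if "T \<in> loose" for T
  proof -
    have "setsum_vec x T \<le> G T" using x that unfolding loose_def base_polytope_def by blast
    then have "setsum_vec x T < G T" using that unfolding loose_def tight_def by auto
    then show ?thesis unfolding slack_def by (simp add: add_pos_nonneg)
  qed
  have \<delta>_pos: "\<delta> > 0" unfolding \<delta>_def using fin slack_pos by (subst Min_gr_iff) auto
  have \<delta>_le: "\<delta> \<le> slack T" if "T \<in> loose" for T
    unfolding \<delta>_def using fin that by (intro Min_le) auto
  have shift: "setsum_vec (\<lambda>i. x i + \<epsilon> * d i) T = setsum_vec x T + \<epsilon> * setsum_vec d T" for \<epsilon> T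
    unfolding setsum_vec_def by (simp add: sum.distrib sum_distrib_left)
  have "(\<lambda>i. x i + \<epsilon> * d i) \<in> base_polytope N G" if \<epsilon>: "0 \<le> \<epsilon>" "\<epsilon> \<le> \<delta>" for \<epsilon>
  proof -
    have "setsum_vec x T + \<epsilon> * setsum_vec d T \<le> G T" if T: "T \<subseteq> {1..N}" for T
    proof (cases "tight N G x T")
      case True
      then show ?thesis using tight_dir[OF True] \<epsilon> unfolding tight_def
        by (simp add: mult_nonneg_nonpos)
    next
      case False
      then have "T \<in> loose" using T unfolding loose_def by blast
      then have "\<epsilon> * (1 + \<bar>setsum_vec d T\<bar>) \<le> slack T * (1 + \<bar>setsum_vec d T\<bar>)"
        using \<delta>_le[of T] \<epsilon> by (intro mult_right_mono) auto
      also have "\<dots> = G T - setsum_vec x T"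
        unfolding slack_def by (simp add: add_pos_nonneg)
      finally have "\<epsilon> * (1 + \<bar>setsum_vec d T\<bar>) \<le> G T - setsum_vec x T" .
      moreover have "\<epsilon> * setsum_vec d T \<le> \<epsilon> * (1 + \<bar>setsum_vec d T\<bar>)"
        using \<epsilon> by (intro mult_left_mono) auto
      ultimately show ?thesis by linarith
    qed
    then show ?thesis using x total by (auto simp: base_polytope_def shift)
  qed
  then show ?thesis using \<delta>_pos by blast
qed

definition pos_part :: "real \<Rightarrow> real" where "pos_part a = max a 0"

definition neg_part :: "real \<Rightarrow> real" where "neg_part a = max (- a) 0"

lemma pos_neg_part_add_scaled_le:
  assumes "0 \<le> \<epsilon>"
  shows "pos_part (a + \<epsilon> * d) \<le> pos_part a + \<epsilon> * pos_part d"
    and "neg_part (a + \<epsilon> * d) \<le> neg_part a + \<epsilon> * neg_part d"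
  using assms unfolding pos_part_def neg_part_def
  by (smt (verit) mult_nonneg_nonneg mult_minus_right mult_right_mono)+

lemma sum_power2_le_power2_sum:
  fixes f :: "'a \<Rightarrow> real"
  assumes "finite A" and "\<And>a. a \<in> A \<Longrightarrow> 0 \<le> f a"
  shows "(\<Sum>a\<in>A. (f a)^2) \<le> (\<Sum>a\<in>A. f a)^2"
proof -
  have "(\<Sum>a\<in>A. (f a)^2) \<le> (\<Sum>a\<in>A. f a * (\<Sum>b\<in>A. f b))"
  proof (rule sum_mono)
    fix a assume a: "a \<in> A"
    then have "f a \<le> (\<Sum>b\<in>A. f b)" using assms by (intro member_le_sum) auto
    then show "(f a)^2 \<le> f a * (\<Sum>b\<in>A. f b)" using assms a by (simp add: power2_eq_square mult_left_mono)
  qed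
  also have "\<dots> = (\<Sum>a\<in>A. f a)^2" by (simp add: power2_eq_square sum_distrib_right)
  finally show ?thesis .
qed

lemma sum_power2_le_parts:
  assumes "finite A"
    and pos: "(\<Sum>a\<in>A. pos_part (d a)) \<le> P" and neg: "(\<Sum>a\<in>A. neg_part (d a)) \<le> P"
  shows "(\<Sum>a\<in>A. (d a)^2) \<le> 2 * P^2"
proof -
  have "(\<Sum>a\<in>A. (pos_part (d a))^2) \<le> (\<Sum>a\<in>A. pos_part (d a))^2"
    by (rule sum_power2_le_power2_sum[OF assms(1)]) (simp add: pos_part_def)
  also have "\<dots> \<le> P^2" using pos by (intro power_mono sum_nonneg) (auto simp: pos_part_def)
  moreover have "(\<Sum>a\<in>A. (neg_part (d a))^2) \<le> (\<Sum>a\<in>A. neg_part (d a))^2"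
    by (rule sum_power2_le_power2_sum[OF assms(1)]) (simp add: neg_part_def)
  moreover have "\<dots> \<le> P^2" using neg by (intro power_mono sum_nonneg) (auto simp: neg_part_def)
  moreover have "(d a)^2 = (pos_part (d a))^2 + (neg_part (d a))^2" for a
    unfolding pos_part_def neg_part_def by (cases "d a \<ge> 0") (auto simp: max_def)
  ultimately show ?thesis by (simp add: sum.distrib)
qed

section \<open>Walks and the flow they carry\<close>

definition walk :: "('r \<Rightarrow> 'a \<Rightarrow> 'a \<Rightarrow> bool) \<Rightarrow> nat \<Rightarrow> (nat \<Rightarrow> 'a) \<Rightarrow> (nat \<Rightarrow> 'r) \<Rightarrow> bool" where
  "walk E k v rs \<longleftrightarrow> (\<forall>m<k. E (rs m) (v m) (v (Suc m)))"

lemma walk_snoc: "walk E k v rs \<Longrightarrow> E r (v k) q \<Longrightarrow> walk E (Suc k) (v(Suc k := q)) (rs(k := r))"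
  unfolding walk_def by (auto simp: less_Suc_eq)

lemma walk_shortcut:
  "walk E k v rs \<Longrightarrow> \<exists>k' v' rs'. walk E k' v' rs' \<and> v' 0 = v 0 \<and> v' k' = v k \<and> inj_on v' {0..k'}"
proof (induction k arbitrary: v rs rule: less_induct)
  case (less k)
  show ?case
  proof (cases "inj_on v {0..k}")
    case True
    then show ?thesis using less.prems by blast
  next
    case False
    then obtain a b where ab: "b \<le> k" "a < b" "v a = v b"
      unfolding inj_on_def by (metis atLeastAtMost_iff linorder_neqE_nat)
    define d where "d = b - a"
    define v' where "v' = (\<lambda>m. if m \<le> a then v m else v (m + d))"
    define rs' where "rs' = (\<lambda>m. if m < a then rs m else rs (m + d))"
    have d: "d > 0" "a + d = b" using ab unfolding d_def by auto
    have v'_shift: "v' m = v (m + d)" if "m \<ge> a" for m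
      using that d ab unfolding v'_def by (cases "m = a") auto
    have "walk E (k - d) v' rs'"
      unfolding walk_def
    proof (intro allI impI)
      fix m assume m: "m < k - d"
      show "E (rs' m) (v' m) (v' (Suc m))"
      proof (cases "m < a")
        case True
        then show ?thesis using less.prems m unfolding walk_def v'_def rs'_def by auto
      next
        case False
        then show ?thesis using less.prems m v'_shift[of m] v'_shift[of "Suc m"]
          unfolding walk_def rs'_def by auto
      qed
    qed
    moreover have "v' (k - d) = v k"
      using ab d v'_shift[of "k - d"] unfolding v'_def by (cases "k - d \<le> a") auto
    ultimately show ?thesis using less.IH[of "k - d" v' rs'] d ab unfolding v'_def by simp
  qed
qed

definition walk_flow :: "nat \<Rightarrow> (nat \<Rightarrow> 'a) \<Rightarrow> (nat \<Rightarrow> 'r) \<Rightarrow> 'r \<Rightarrow> 'a \<Rightarrow> real" where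
  "walk_flow k v rs r i =
     (\<Sum>m<k. if rs m = r then (if i = v m then 1 else 0) - (if i = v (Suc m) then 1 else 0) else 0)"

lemma walk_flow_sum_components:
  assumes "finite Rs" and "\<And>m. m < k \<Longrightarrow> rs m \<in> Rs"
  shows "(\<Sum>r\<in>Rs. walk_flow k v rs r i) = (if i = v 0 then 1 else 0) - (if i = v k then 1 else 0)"
proof -
  have "(\<Sum>r\<in>Rs. walk_flow k v rs r i)
      = (\<Sum>m<k. (if i = v m then 1 else 0) - (if i = v (Suc m) then 1 else 0))"
    unfolding walk_flow_def using assms by (subst sum.swap) (simp add: sum.delta')
  also have "\<dots> = (if i = v 0 then 1 else 0) - (if i = v k then 1 else 0)"
    by (rule sum_lessThan_telescope')
  finally show ?thesis .
qed

lemma walk_flow_sum_set: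
  assumes "finite S"
  shows "(\<Sum>i\<in>S. walk_flow k v rs r i)
       = (\<Sum>m<k. if rs m = r then (if v m \<in> S then 1 else 0) - (if v (Suc m) \<in> S then 1 else 0) else 0)"
  unfolding walk_flow_def using assms
  by (subst sum.swap) (auto intro!: sum.cong simp: sum_subtractf sum.delta)

lemma walk_flow_eq_0:
  assumes "\<And>m. m < k \<Longrightarrow> rs m \<noteq> r \<or> (v m \<noteq> i \<and> v (Suc m) \<noteq> i)"
  shows "walk_flow k v rs r i = 0"
  unfolding walk_flow_def using assms by (intro sum.neutral) auto

lemma sum_count_inj_le_1:
  assumes "inj_on f A" and "finite A"
  shows "(\<Sum>m\<in>A. if i = f m then 1 else 0 :: real) \<le> 1"
proof -
  have "(\<Sum>m\<in>A. if i = f m then 1 else 0 :: real) = real (card {m\<in>A. i = f m})"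
    using assms(2) by (simp add: sum.inter_filter[symmetric])
  moreover have "card {m\<in>A. i = f m} \<le> Suc 0"
    using assms by (auto simp: card_le_Suc0_iff_eq inj_on_def)
  ultimately show ?thesis by simp
qed

text \<open>A simple walk enters and leaves each vertex at most once, so the flow it carries
  through a vertex has positive and negative parts of total mass at most one.\<close>

lemma walk_flow_parts_sum_le_1:
  assumes inj: "inj_on v {0..k}" and Rs: "finite Rs" "\<And>m. m < k \<Longrightarrow> rs m \<in> Rs"
  shows "(\<Sum>r\<in>Rs. pos_part (walk_flow k v rs r i)) \<le> 1"
    and "(\<Sum>r\<in>Rs. neg_part (walk_flow k v rs r i)) \<le> 1"
proof -
  have count: "(\<Sum>r\<in>Rs. \<Sum>m<k. if rs m = r \<and> i = u m then 1 else 0 :: real)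
             = (\<Sum>m<k. if i = u m then 1 else 0)" for u :: "nat \<Rightarrow> 'a"
    using Rs by (subst sum.swap) (auto intro!: sum.cong simp: sum.delta')
  have "inj_on v {..<k}" "inj_on (v \<circ> Suc) {..<k}"
    by (auto intro!: comp_inj_on inj_on_subset[OF inj])
  then have visits: "(\<Sum>m<k. if i = v m then 1 else 0 :: real) \<le> 1"
    and exits: "(\<Sum>m<k. if i = v (Suc m) then 1 else 0 :: real) \<le> 1"
    using sum_count_inj_le_1[of v "{..<k}" i] sum_count_inj_le_1[of "v \<circ> Suc" "{..<k}" i] by auto
  have "pos_part (walk_flow k v rs r i) \<le> (\<Sum>m<k. if rs m = r \<and> i = v m then 1 else 0)" for r
    unfolding pos_part_def walk_flow_def by (intro max.boundedI sum_mono sum_nonneg) auto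
  then have "(\<Sum>r\<in>Rs. pos_part (walk_flow k v rs r i))
           \<le> (\<Sum>r\<in>Rs. \<Sum>m<k. if rs m = r \<and> i = v m then 1 else 0)"
    by (rule sum_mono)
  then show "(\<Sum>r\<in>Rs. pos_part (walk_flow k v rs r i)) \<le> 1" using count[of v] visits by simp
  have "neg_part (walk_flow k v rs r i) \<le> (\<Sum>m<k. if rs m = r \<and> i = v (Suc m) then 1 else 0)" for r
    unfolding neg_part_def walk_flow_def
    by (intro max.boundedI sum_nonneg) (auto simp: sum_negf[symmetric] intro!: sum_mono)
  then have "(\<Sum>r\<in>Rs. neg_part (walk_flow k v rs r i))
           \<le> (\<Sum>r\<in>Rs. \<Sum>m<k. if rs m = r \<and> i = v (Suc m) then 1 else 0)"
    by (rule sum_mono)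
  then show "(\<Sum>r\<in>Rs. neg_part (walk_flow k v rs r i)) \<le> 1"
    using count[of "v \<circ> Suc"] exits by simp
qed

lemma norm2theta_power2:
  assumes "\<forall>r\<in>{1..R}. \<forall>i\<in>{1..N}. \<theta> r i \<ge> 0"
  shows "(norm2theta N R \<theta> d)^2 = (\<Sum>r\<in>{1..R}. \<Sum>i\<in>{1..N}. \<theta> r i * (d r i)^2)"
proof -
  have "(norm2theta N R \<theta> d)^2 = (\<Sum>r\<in>{1..R}. (norm2w N (\<theta> r) (d r))^2)"
    unfolding norm2theta_def by (simp add: sum_nonneg)
  also have "\<dots> = (\<Sum>r\<in>{1..R}. \<Sum>i\<in>{1..N}. \<theta> r i * (d r i)^2)"
    using assms unfolding norm2w_def by (intro sum.cong refl, subst real_sqrt_pow2) (auto intro!: sum_nonneg)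
  finally show ?thesis .
qed

lemma norm1_le_norm2w:
  assumes w_pos: "\<forall>i\<in>{1..N}. w i > 0"
  shows "norm1 N e \<le> sqrt (norm1 N (\<lambda>i. inverse (w i))) * norm2w N w e"
proof -
  have nonneg: "0 \<le> (\<Sum>i\<in>{1..N}. w i * (e i)^2)"
    using w_pos by (intro sum_nonneg) (simp add: less_imp_le)
  have "norm1 N e = (\<Sum>i\<in>{1..N}. sqrt (inverse (w i)) * (sqrt (w i) * \<bar>e i\<bar>))"
    unfolding norm1_def
  proof (intro sum.cong refl)
    fix i assume "i \<in> {1..N}"
    then have "w i \<noteq> 0" using w_pos by fastforce
    then have "sqrt (inverse (w i)) * sqrt (w i) = 1" by (simp add: real_sqrt_mult[symmetric])
    then show "\<bar>e i\<bar> = sqrt (inverse (w i)) * (sqrt (w i) * \<bar>e i\<bar>)"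
      by (metis mult.assoc mult_1)
  qed
  then have "(norm1 N e)^2
      \<le> (\<Sum>i\<in>{1..N}. (sqrt (inverse (w i)))^2) * (\<Sum>i\<in>{1..N}. (sqrt (w i) * \<bar>e i\<bar>)^2)"
    using Cauchy_Schwarz_ineq_sum by simp
  also have "\<dots> = norm1 N (\<lambda>i. inverse (w i)) * (norm2w N w e)^2"
    unfolding norm1_def norm2w_def using w_pos nonneg by (simp add: power_mult_distrib less_imp_le)
  finally have "norm1 N e \<le> sqrt (norm1 N (\<lambda>i. inverse (w i)) * (norm2w N w e)^2)"
    by (rule real_le_rsqrt)
  also have "\<dots> = sqrt (norm1 N (\<lambda>i. inverse (w i))) * norm2w N w e"
    using nonneg unfolding norm2w_def by (simp add: real_sqrt_mult)
  finally show ?thesis .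
qed

lemma incident_weight_pos:
  fixes R :: nat and \<theta> :: "nat \<Rightarrow> nat \<Rightarrow> real"
  assumes "i \<in> {1..N}" and "\<exists>r\<in>{1..R}. incident N (F r) i"
    and "\<forall>r\<in>{1..R}. \<theta> r i > 0"
  shows "0 < Max {\<theta> r i | r. r \<in> {1..R} \<and> incident N (F r) i}"
proof -
  obtain r where r: "r \<in> {1..R}" "incident N (F r) i" using assms(2) by blast
  have "finite {\<theta> r i | r. r \<in> {1..R} \<and> incident N (F r) i}" by simp
  then have "\<theta> r i \<le> Max {\<theta> r i | r. r \<in> {1..R} \<and> incident N (F r) i}"
    using r by (intro Max_ge) blast+
  moreover have "\<theta> r i > 0" using assms(3) r(1) by blast
  ultimately show ?thesis by linarith
qed

lemma norm1inf_nonneg: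
  assumes "\<forall>i\<in>{1..N}. \<exists>r\<in>{1..R}. incident N (F r) i" and "\<forall>r\<in>{1..R}. \<forall>i\<in>{1..N}. \<theta> r i > 0"
  shows "0 \<le> norm1inf N R F \<theta>"
  unfolding norm1inf_def using assms by (intro sum_nonneg less_imp_le incident_weight_pos) auto

section \<open>Moving a point of \<B> towards a decomposition of z\<close>

lemma compact_PiE_UNIV: "(\<And>i. compact (S i)) \<Longrightarrow> compact (PiE UNIV S)"
  using compactin_PiE[of "\<lambda>_. euclidean" UNIV S] euclidean_product_topology
  by (metis compactin_euclidean_iff)

lemma continuous_on_eval2 [continuous_intros]:
  "continuous_on S (\<lambda>\<xi> :: nat \<Rightarrow> nat \<Rightarrow> real. \<xi> r i)"
proof -
  have "continuous_on UNIV (\<lambda>\<xi> :: nat \<Rightarrow> nat \<Rightarrow> real. \<xi> r i)"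
    by (rule continuous_on_product_then_coordinatewise) simp
  then show ?thesis using continuous_on_subset by blast
qed

locale base_decomposition =
  fixes N R :: nat and F :: "nat \<Rightarrow> nat set \<Rightarrow> real"
    and y :: "nat \<Rightarrow> nat \<Rightarrow> real" and z :: "nat \<Rightarrow> real"
  assumes submodular: "\<forall>r\<in>{1..R}. submodular_on N (F r) \<and> F r {} = 0"
    and y_base: "y \<in> prod_base N R F"
    and z_base: "z \<in> base_polytope N (\<lambda>S. \<Sum>r\<in>{1..R}. F r S)"
begin

definition deficit :: "(nat \<Rightarrow> nat \<Rightarrow> real) \<Rightarrow> nat \<Rightarrow> real" where
  "deficit \<xi> i = z i - opA R \<xi> i"

definition total_deficit :: "(nat \<Rightarrow> nat \<Rightarrow> real) \<Rightarrow> real" where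
  "total_deficit \<xi> = (\<Sum>i\<in>{1..N}. pos_part (deficit \<xi> i))"

text \<open>Exactly when \<xi> r + \<epsilon> (e_p - e_q) stays in the base polytope of F r for small \<epsilon> > 0.\<close>

definition exchangeable :: "(nat \<Rightarrow> nat \<Rightarrow> real) \<Rightarrow> nat \<Rightarrow> nat \<Rightarrow> nat \<Rightarrow> bool" where
  "exchangeable \<xi> r p q \<longleftrightarrow> r \<in> {1..R} \<and> p \<in> {1..N} \<and> q \<in> {1..N} \<and> p \<noteq> q \<and>
     (\<forall>T. tight N (F r) (\<xi> r) T \<longrightarrow> p \<in> T \<longrightarrow> q \<in> T)"

lemma deficit_sum_eq_0:
  assumes "\<forall>r\<in>{1..R}. \<xi> r \<in> base_polytope N (F r)"
  shows "(\<Sum>i\<in>{1..N}. deficit \<xi> i) = 0"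
proof -
  have "(\<Sum>i\<in>{1..N}. opA R \<xi> i) = (\<Sum>r\<in>{1..R}. setsum_vec (\<xi> r) {1..N})"
    unfolding opA_def setsum_vec_def by (rule sum.swap)
  also have "\<dots> = (\<Sum>r\<in>{1..R}. F r {1..N})"
    using assms unfolding base_polytope_def by (intro sum.cong) auto
  also have "\<dots> = (\<Sum>i\<in>{1..N}. z i)" using z_base unfolding base_polytope_def setsum_vec_def by auto
  finally show ?thesis unfolding deficit_def by (simp add: sum_subtractf)
qed

lemma deficit_sum_nonpos_if_tight:
  assumes U: "U \<subseteq> {1..N}" and tight: "\<forall>r\<in>{1..R}. tight N (F r) (\<xi> r) U"
  shows "(\<Sum>i\<in>U. deficit \<xi> i) \<le> 0"
proof -
  have "(\<Sum>i\<in>U. deficit \<xi> i) = setsum_vec z U - (\<Sum>r\<in>{1..R}. setsum_vec (\<xi> r) U)"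
    unfolding deficit_def setsum_vec_def opA_def by (simp add: sum_subtractf sum.swap[of _ U])
  also have "\<dots> = setsum_vec z U - (\<Sum>r\<in>{1..R}. F r U)"
    using tight unfolding tight_def by simp
  also have "\<dots> \<le> 0" using z_base U unfolding base_polytope_def by auto
  finally show ?thesis .
qed

lemma exchange_closed_tight:
  assumes base: "\<forall>r\<in>{1..R}. \<xi> r \<in> base_polytope N (F r)" and U: "U \<subseteq> {1..N}"
    and closed: "\<And>r p q. p \<in> U \<Longrightarrow> exchangeable \<xi> r p q \<Longrightarrow> q \<in> U"
    and r: "r \<in> {1..R}"
  shows "tight N (F r) (\<xi> r) U"
proof (rule tight_if_separated[OF _ _ _ U])
  show "submodular_on N (F r)" "F r {} = 0" "\<xi> r \<in> base_polytope N (F r)"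
    using submodular base r by auto
  show "\<forall>p\<in>U. \<forall>q\<in>{1..N} - U. \<exists>T. tight N (F r) (\<xi> r) T \<and> p \<in> T \<and> q \<notin> T"
    using closed U r unfolding exchangeable_def by blast
qed

lemma exists_positive_deficit:
  assumes "total_deficit \<xi> > 0"
  shows "\<exists>p\<in>{1..N}. deficit \<xi> p > 0"
proof (rule ccontr)
  assume "\<not> ?thesis"
  then have "total_deficit \<xi> = 0"
    unfolding total_deficit_def pos_part_def by (intro sum.neutral) auto
  with assms show False by simp
qed

lemma exists_deficit_walk:
  assumes base: "\<forall>r\<in>{1..R}. \<xi> r \<in> base_polytope N (F r)" and pos: "total_deficit \<xi> > 0"
  shows "\<exists>k v rs. walk (exchangeable \<xi>) k v rs \<and> inj_on v {0..k}
           \<and> v 0 \<in> {1..N} \<and> deficit \<xi> (v 0) > 0 \<and> deficit \<xi> (v k) < 0"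
proof -
  obtain p where p: "p \<in> {1..N}" "deficit \<xi> p > 0"
    using exists_positive_deficit[OF pos] by blast
  define U where "U = {q. \<exists>k v rs. walk (exchangeable \<xi>) k v rs \<and> v 0 = p \<and> v k = q}"
  have pU: "p \<in> U" unfolding U_def walk_def by (intro CollectI exI[of _ 0]) auto
  have U: "U \<subseteq> {1..N}"
  proof
    fix q assume "q \<in> U"
    then obtain k v rs where "walk (exchangeable \<xi>) k v rs" "v 0 = p" "v k = q"
      unfolding U_def by blast
    then show "q \<in> {1..N}"
      using p unfolding walk_def exchangeable_def by (cases k) auto
  qed
  have U_closed: "q' \<in> U" if qU: "q \<in> U" and qq': "exchangeable \<xi> r q q'" for q q' r
  proof -
    obtain k v rs where walk: "walk (exchangeable \<xi>) k v rs" "v 0 = p" "v k = q"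
      using qU unfolding U_def by blast
    have "walk (exchangeable \<xi>) (Suc k) (v(Suc k := q')) (rs(k := r))"
      using walk_snoc[OF walk(1)] walk(3) qq' by blast
    then show ?thesis unfolding U_def using walk(2) by force
  qed
  show ?thesis
  proof (cases "\<exists>q\<in>U. deficit \<xi> q < 0")
    case True
    then obtain k v rs where walk: "walk (exchangeable \<xi>) k v rs" "v 0 = p" "deficit \<xi> (v k) < 0"
      unfolding U_def by blast
    from walk_shortcut[OF walk(1)] obtain k' v' rs' where
      "walk (exchangeable \<xi>) k' v' rs'" "v' 0 = v 0" "v' k' = v k" "inj_on v' {0..k'}"
      by blast
    then show ?thesis using walk p by metis
  next
    case False
    have "tight N (F r) (\<xi> r) U" if "r \<in> {1..R}" for r
      using exchange_closed_tight[OF base U _ that] U_closed by blast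
    then have "(\<Sum>i\<in>U. deficit \<xi> i) \<le> 0" by (intro deficit_sum_nonpos_if_tight U) blast
    moreover have "deficit \<xi> p \<le> (\<Sum>i\<in>U. deficit \<xi> i)"
      using False pU U finite_subset by (intro member_le_sum) (auto simp: not_less)
    ultimately show ?thesis using p by linarith
  qed
qed

lemma walk_flow_feasible_direction:
  assumes walk: "walk (exchangeable \<xi>) k v rs" and base: "\<xi> r \<in> base_polytope N (F r)"
  shows "\<exists>\<delta>>0. \<forall>\<epsilon>. 0 \<le> \<epsilon> \<and> \<epsilon> \<le> \<delta> \<longrightarrow>
           (\<lambda>i. \<xi> r i + \<epsilon> * walk_flow k v rs r i) \<in> base_polytope N (F r)"
proof (rule base_polytope_feasible_direction[OF base])
  have step: "v m \<in> {1..N}" "v (Suc m) \<in> {1..N}"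
    "\<And>T. tight N (F (rs m)) (\<xi> (rs m)) T \<Longrightarrow> v m \<in> T \<Longrightarrow> v (Suc m) \<in> T" if "m < k" for m
    using walk that unfolding walk_def exchangeable_def by blast+
  fix T assume T: "tight N (F r) (\<xi> r) T"
  then have "finite T" unfolding tight_def using finite_subset by blast
  then show "setsum_vec (walk_flow k v rs r) T \<le> 0"
    unfolding setsum_vec_def walk_flow_sum_set[OF \<open>finite T\<close>]
    using step(3) T by (intro sum_nonpos) auto
next
  have step: "v m \<in> {1..N}" "v (Suc m) \<in> {1..N}" if "m < k" for m
    using walk that unfolding walk_def exchangeable_def by blast+
  then show "setsum_vec (walk_flow k v rs r) {1..N} = 0"
    unfolding setsum_vec_def walk_flow_sum_set[OF finite_atLeastAtMost]
    by (intro sum.neutral) auto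
qed

definition budget :: real where "budget = total_deficit y"

text \<open>The vanishing outside {1..R} \<times> {1..N} only serves to make this set compact.\<close>

definition admissible :: "(nat \<Rightarrow> nat \<Rightarrow> real) set" where
  "admissible = {\<xi>. (\<forall>r i. r \<notin> {1..R} \<or> i \<notin> {1..N} \<longrightarrow> \<xi> r i = 0)
     \<and> (\<forall>r\<in>{1..R}. \<xi> r \<in> base_polytope N (F r))
     \<and> (\<forall>i\<in>{1..N}. (\<Sum>r\<in>{1..R}. pos_part (\<xi> r i - y r i)) \<le> budget - total_deficit \<xi>
                 \<and> (\<Sum>r\<in>{1..R}. neg_part (\<xi> r i - y r i)) \<le> budget - total_deficit \<xi>)}"

lemma total_deficit_shift:
  assumes labels: "\<And>m. m < k \<Longrightarrow> rs m \<in> {1..R}"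
    and v0: "v 0 \<in> {1..N}" and ends: "v 0 \<noteq> v k"
    and \<epsilon>: "0 \<le> \<epsilon>" "\<epsilon> \<le> deficit \<xi> (v 0)" "\<epsilon> \<le> - deficit \<xi> (v k)"
  shows "total_deficit (\<lambda>r i. \<xi> r i + \<epsilon> * walk_flow k v rs r i) = total_deficit \<xi> - \<epsilon>"
proof -
  let ?\<xi>' = "\<lambda>r i. \<xi> r i + \<epsilon> * walk_flow k v rs r i"
  have "deficit ?\<xi>' i = deficit \<xi> i - \<epsilon> * ((if i = v 0 then 1 else 0) - (if i = v k then 1 else 0))"
    for i
  proof -
    have "opA R ?\<xi>' i = opA R \<xi> i + \<epsilon> * (\<Sum>r\<in>{1..R}. walk_flow k v rs r i)"
      unfolding opA_def by (simp add: sum.distrib sum_distrib_left)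
    moreover have "(\<Sum>r\<in>{1..R}. walk_flow k v rs r i)
        = (if i = v 0 then 1 else 0) - (if i = v k then 1 else 0)"
      using labels by (intro walk_flow_sum_components) auto
    ultimately show ?thesis unfolding deficit_def by simp
  qed
  then have "pos_part (deficit ?\<xi>' i) = pos_part (deficit \<xi> i) - (if i = v 0 then \<epsilon> else 0)" for i
    using ends \<epsilon> unfolding pos_part_def by auto
  then show ?thesis unfolding total_deficit_def using v0 by (simp add: sum_subtractf sum.delta')
qed

lemma admissible_shift:
  assumes \<xi>: "\<xi> \<in> admissible"
    and walk: "walk (exchangeable \<xi>) k v rs" and inj: "inj_on v {0..k}"
    and v0: "v 0 \<in> {1..N}" and ends: "v 0 \<noteq> v k"
    and \<epsilon>: "0 \<le> \<epsilon>" "\<epsilon> \<le> deficit \<xi> (v 0)" "\<epsilon> \<le> - deficit \<xi> (v k)"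
    and base: "\<And>r. r \<in> {1..R} \<Longrightarrow>
                 (\<lambda>i. \<xi> r i + \<epsilon> * walk_flow k v rs r i) \<in> base_polytope N (F r)"
  defines "\<xi>' \<equiv> \<lambda>r i. \<xi> r i + \<epsilon> * walk_flow k v rs r i"
  shows "\<xi>' \<in> admissible" and "total_deficit \<xi>' = total_deficit \<xi> - \<epsilon>"
proof -
  have step: "rs m \<in> {1..R}" "v m \<in> {1..N}" "v (Suc m) \<in> {1..N}" if "m < k" for m
    using walk that unfolding walk_def exchangeable_def by blast+
  show deficit': "total_deficit \<xi>' = total_deficit \<xi> - \<epsilon>"
    unfolding \<xi>'_def using step(1) by (intro total_deficit_shift v0 ends \<epsilon>) auto
  have moved: "\<xi>' r i - y r i = (\<xi> r i - y r i) + \<epsilon> * walk_flow k v rs r i" for r i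
    unfolding \<xi>'_def by simp
  have "(\<Sum>r\<in>{1..R}. pos_part (\<xi>' r i - y r i)) \<le> budget - total_deficit \<xi>'"
    "(\<Sum>r\<in>{1..R}. neg_part (\<xi>' r i - y r i)) \<le> budget - total_deficit \<xi>'" if i: "i \<in> {1..N}" for i
  proof -
    have old: "(\<Sum>r\<in>{1..R}. pos_part (\<xi> r i - y r i)) \<le> budget - total_deficit \<xi>"
      "(\<Sum>r\<in>{1..R}. neg_part (\<xi> r i - y r i)) \<le> budget - total_deficit \<xi>"
      using \<xi> i unfolding admissible_def by blast+
    have "(\<Sum>r\<in>{1..R}. pos_part (walk_flow k v rs r i)) \<le> 1"
      "(\<Sum>r\<in>{1..R}. neg_part (walk_flow k v rs r i)) \<le> 1"
      using walk_flow_parts_sum_le_1[OF inj, of "{1..R}" rs i] step(1) by auto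
    then have "\<epsilon> * (\<Sum>r\<in>{1..R}. pos_part (walk_flow k v rs r i)) \<le> \<epsilon>"
      "\<epsilon> * (\<Sum>r\<in>{1..R}. neg_part (walk_flow k v rs r i)) \<le> \<epsilon>"
      using \<epsilon>(1) by (simp_all add: mult_left_le)
    moreover have "(\<Sum>r\<in>{1..R}. pos_part (\<xi>' r i - y r i))
        \<le> (\<Sum>r\<in>{1..R}. pos_part (\<xi> r i - y r i)) + \<epsilon> * (\<Sum>r\<in>{1..R}. pos_part (walk_flow k v rs r i))"
      "(\<Sum>r\<in>{1..R}. neg_part (\<xi>' r i - y r i))
        \<le> (\<Sum>r\<in>{1..R}. neg_part (\<xi> r i - y r i)) + \<epsilon> * (\<Sum>r\<in>{1..R}. neg_part (walk_flow k v rs r i))"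
      unfolding moved sum_distrib_left sum.distrib[symmetric]
      by (intro sum_mono pos_neg_part_add_scaled_le \<epsilon>(1))+
    ultimately show "(\<Sum>r\<in>{1..R}. pos_part (\<xi>' r i - y r i)) \<le> budget - total_deficit \<xi>'"
      "(\<Sum>r\<in>{1..R}. neg_part (\<xi>' r i - y r i)) \<le> budget - total_deficit \<xi>'"
      using old deficit' by linarith+
  qed
  moreover have "\<xi>' r i = 0" if "r \<notin> {1..R} \<or> i \<notin> {1..N}" for r i
    using that \<xi> step unfolding admissible_def \<xi>'_def by (auto intro!: walk_flow_eq_0)
  ultimately show "\<xi>' \<in> admissible" using base unfolding admissible_def \<xi>'_def by auto
qed

lemma admissible_decrease:
  assumes \<xi>: "\<xi> \<in> admissible" and pos: "total_deficit \<xi> > 0"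
  shows "\<exists>\<xi>'\<in>admissible. total_deficit \<xi>' < total_deficit \<xi>"
proof -
  have base: "\<forall>r\<in>{1..R}. \<xi> r \<in> base_polytope N (F r)" using \<xi> unfolding admissible_def by blast
  obtain k v rs where walk: "walk (exchangeable \<xi>) k v rs" and inj: "inj_on v {0..k}"
    and v0: "v 0 \<in> {1..N}" "deficit \<xi> (v 0) > 0" and vk: "deficit \<xi> (v k) < 0"
    using exists_deficit_walk[OF base pos] by blast
  have "\<forall>r\<in>{1..R}. \<exists>\<delta>>0. \<forall>\<epsilon>. 0 \<le> \<epsilon> \<and> \<epsilon> \<le> \<delta> \<longrightarrow>
          (\<lambda>i. \<xi> r i + \<epsilon> * walk_flow k v rs r i) \<in> base_polytope N (F r)"
    using walk_flow_feasible_direction[OF walk] base by blast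
  then obtain \<delta> where \<delta>: "\<forall>r\<in>{1..R}. \<delta> r > 0 \<and> (\<forall>\<epsilon>. 0 \<le> \<epsilon> \<and> \<epsilon> \<le> \<delta> r \<longrightarrow>
          (\<lambda>i. \<xi> r i + \<epsilon> * walk_flow k v rs r i) \<in> base_polytope N (F r))"
    by (rule bchoice[THEN exE])
  define \<epsilon> where "\<epsilon> = min (min (deficit \<xi> (v 0)) (- deficit \<xi> (v k))) (Min (insert 1 (\<delta> ` {1..R})))"
  have "0 < Min (insert 1 (\<delta> ` {1..R}))" using \<delta> by (subst Min_gr_iff) auto
  then have \<epsilon>_pos: "\<epsilon> > 0" using v0 vk unfolding \<epsilon>_def by simp
  have \<epsilon>_le: "\<epsilon> \<le> deficit \<xi> (v 0)" "\<epsilon> \<le> - deficit \<xi> (v k)" unfolding \<epsilon>_def by auto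
  have "\<epsilon> \<le> \<delta> r" if "r \<in> {1..R}" for r
  proof -
    have "Min (insert 1 (\<delta> ` {1..R})) \<le> \<delta> r" using that by (intro Min_le) auto
    then show ?thesis unfolding \<epsilon>_def by linarith
  qed
  then have "(\<lambda>i. \<xi> r i + \<epsilon> * walk_flow k v rs r i) \<in> base_polytope N (F r)" if "r \<in> {1..R}" for r
    using \<delta> \<epsilon>_pos that by auto
  moreover have "v 0 \<noteq> v k" using v0 vk by auto
  ultimately have "(\<lambda>r i. \<xi> r i + \<epsilon> * walk_flow k v rs r i) \<in> admissible"
    "total_deficit (\<lambda>r i. \<xi> r i + \<epsilon> * walk_flow k v rs r i) = total_deficit \<xi> - \<epsilon>"
    using admissible_shift[OF \<xi> walk inj v0(1) _ less_imp_le[OF \<epsilon>_pos] \<epsilon>_le] by blast+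
  then show ?thesis using \<epsilon>_pos by (intro bexI[of _ "\<lambda>r i. \<xi> r i + \<epsilon> * walk_flow k v rs r i"]) auto
qed

lemma admissible_nonempty: "admissible \<noteq> {}"
proof -
  define y0 where "y0 = (\<lambda>r i. if r \<in> {1..R} \<and> i \<in> {1..N} then y r i else 0)"
  have "y0 r \<in> base_polytope N (F r)" if r: "r \<in> {1..R}" for r
  proof -
    have "setsum_vec (y0 r) S = setsum_vec (y r) S" if "S \<subseteq> {1..N}" for S
      unfolding setsum_vec_def y0_def using r that by (intro sum.cong) auto
    moreover have "y r \<in> base_polytope N (F r)" using y_base r unfolding prod_base_def by blast
    ultimately show ?thesis unfolding base_polytope_def by simp
  qed
  moreover have "total_deficit y0 = budget"
    unfolding budget_def total_deficit_def deficit_def opA_def y0_def by (intro sum.cong) auto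
  moreover have "(\<Sum>r\<in>{1..R}. pos_part (y0 r i - y r i)) = 0"
    "(\<Sum>r\<in>{1..R}. neg_part (y0 r i - y r i)) = 0" if "i \<in> {1..N}" for i
    using that unfolding y0_def pos_part_def neg_part_def by (auto intro!: sum.neutral)
  ultimately have "y0 \<in> admissible"
    unfolding admissible_def y0_def by (auto simp: pos_part_def neg_part_def)
  then show ?thesis by blast
qed

lemma admissible_closed: "closed admissible"
proof -
  have "admissible = {\<xi>. (\<forall>r i. r \<notin> {1..R} \<or> i \<notin> {1..N} \<longrightarrow> \<xi> r i = 0)
     \<and> (\<forall>r. r \<in> {1..R} \<longrightarrow> (\<forall>S. S \<subseteq> {1..N} \<longrightarrow> (\<Sum>i\<in>S. \<xi> r i) \<le> F r S)
                         \<and> (\<Sum>i\<in>{1..N}. \<xi> r i) = F r {1..N})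
     \<and> (\<forall>i. i \<in> {1..N} \<longrightarrow>
          (\<Sum>r\<in>{1..R}. max (\<xi> r i - y r i) 0)
            \<le> budget - (\<Sum>i\<in>{1..N}. max (z i - (\<Sum>r\<in>{1..R}. \<xi> r i)) 0)
        \<and> (\<Sum>r\<in>{1..R}. max (- (\<xi> r i - y r i)) 0)
            \<le> budget - (\<Sum>i\<in>{1..N}. max (z i - (\<Sum>r\<in>{1..R}. \<xi> r i)) 0))}"
    unfolding admissible_def base_polytope_def setsum_vec_def total_deficit_def deficit_def
      opA_def pos_part_def neg_part_def by auto
  also have "closed \<dots>"
    by (intro closed_Collect_conj closed_Collect_all closed_Collect_imp open_Collect_const
        closed_Collect_le closed_Collect_eq continuous_intros)
  finally show ?thesis .
qed

lemma admissible_compact: "compact admissible"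
proof -
  define lo where "lo = (\<lambda>r i. if r \<in> {1..R} \<and> i \<in> {1..N} then F r {1..N} - F r ({1..N} - {i}) else 0)"
  define hi where "hi = (\<lambda>r i. if r \<in> {1..R} \<and> i \<in> {1..N} then F r {i} else 0)"
  have "admissible \<subseteq> PiE UNIV (\<lambda>r. PiE UNIV (\<lambda>i. {lo r i..hi r i}))"
  proof
    fix \<xi> assume \<xi>: "\<xi> \<in> admissible"
    have "\<xi> r i \<in> {lo r i..hi r i}" for r i
    proof (cases "r \<in> {1..R} \<and> i \<in> {1..N}")
      case True
      then have "\<xi> r \<in> base_polytope N (F r)" using \<xi> unfolding admissible_def by blast
      then show ?thesis using base_polytope_coord_bounds[of "\<xi> r" N "F r" i] True
        unfolding lo_def hi_def by auto
    next
      case False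
      then show ?thesis using \<xi> unfolding admissible_def lo_def hi_def by auto
    qed
    then show "\<xi> \<in> PiE UNIV (\<lambda>r. PiE UNIV (\<lambda>i. {lo r i..hi r i}))" by (simp add: PiE_iff)
  qed
  moreover have "compact (PiE UNIV (\<lambda>r. PiE UNIV (\<lambda>i. {lo r i..hi r i})))"
    by (intro compact_PiE_UNIV compact_Icc)
  ultimately show ?thesis
    using compact_Int_closed[OF _ admissible_closed] by (metis inf.absorb_iff2)
qed

lemma exists_balanced_decomposition:
  obtains \<xi> where "\<xi> \<in> prod_base N R F" and "\<forall>i\<in>{1..N}. opA R \<xi> i = z i"
    and "\<forall>i\<in>{1..N}. (\<Sum>r\<in>{1..R}. pos_part (\<xi> r i - y r i)) \<le> budget
                  \<and> (\<Sum>r\<in>{1..R}. neg_part (\<xi> r i - y r i)) \<le> budget"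
proof -
  have "continuous_on admissible total_deficit"
    unfolding total_deficit_def deficit_def opA_def pos_part_def by (intro continuous_intros)
  then obtain \<xi> where \<xi>: "\<xi> \<in> admissible" and min: "\<forall>\<eta>\<in>admissible. total_deficit \<xi> \<le> total_deficit \<eta>"
    using continuous_attains_inf[OF admissible_compact admissible_nonempty] by blast
  have "total_deficit \<xi> = 0"
  proof -
    have "total_deficit \<xi> \<ge> 0" unfolding total_deficit_def pos_part_def by (intro sum_nonneg) auto
    moreover have "\<not> total_deficit \<xi> > 0" using admissible_decrease[OF \<xi>] min by force
    ultimately show ?thesis by linarith
  qed
  have base: "\<forall>r\<in>{1..R}. \<xi> r \<in> base_polytope N (F r)" using \<xi> unfolding admissible_def by blast
  have "\<forall>i\<in>{1..N}. deficit \<xi> i \<le> 0"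
    using \<open>total_deficit \<xi> = 0\<close> unfolding total_deficit_def pos_part_def
    by (subst (asm) sum_nonneg_eq_0_iff) auto
  moreover have "(\<Sum>i\<in>{1..N}. - deficit \<xi> i) = 0"
    using deficit_sum_eq_0[OF base] by (simp add: sum_negf)
  ultimately have "\<forall>i\<in>{1..N}. deficit \<xi> i = 0"
    by (subst (asm) sum_nonneg_eq_0_iff) auto
  then show ?thesis
    using that base \<xi> \<open>total_deficit \<xi> = 0\<close> unfolding admissible_def prod_base_def deficit_def
    by auto
qed

lemma norm1_gap_eq: "norm1 N (\<lambda>i. opA R y i - z i) = 2 * budget"
proof -
  have "\<forall>r\<in>{1..R}. y r \<in> base_polytope N (F r)" using y_base unfolding prod_base_def by blast
  then have "(\<Sum>i\<in>{1..N}. deficit y i) = 0" by (rule deficit_sum_eq_0)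
  moreover have "\<bar>opA R y i - z i\<bar> = 2 * pos_part (deficit y i) - deficit y i" for i
    unfolding deficit_def pos_part_def by (auto simp: max_def abs_if)
  ultimately show ?thesis unfolding norm1_def budget_def total_deficit_def
    by (simp add: sum_subtractf sum_distrib_left)
qed

lemma weighted_sum_power2_le:
  fixes \<theta> :: "nat \<Rightarrow> nat \<Rightarrow> real"
  assumes i: "i \<in> {1..N}" and cover: "\<exists>r\<in>{1..R}. incident N (F r) i"
    and \<theta>_pos: "\<forall>r\<in>{1..R}. \<theta> r i > 0"
    and \<xi>: "\<xi> \<in> prod_base N R F"
    and balanced: "(\<Sum>r\<in>{1..R}. pos_part (\<xi> r i - y r i)) \<le> budget"
                  "(\<Sum>r\<in>{1..R}. neg_part (\<xi> r i - y r i)) \<le> budget"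
  shows "(\<Sum>r\<in>{1..R}. \<theta> r i * (\<xi> r i - y r i)^2)
           \<le> Max {\<theta> r i | r. r \<in> {1..R} \<and> incident N (F r) i} * (2 * budget^2)"
proof -
  define M where "M = Max {\<theta> r i | r. r \<in> {1..R} \<and> incident N (F r) i}"
  have "\<theta> r i * (\<xi> r i - y r i)^2 \<le> M * (\<xi> r i - y r i)^2" if r: "r \<in> {1..R}" for r
  proof (cases "incident N (F r) i")
    case True
    then have "\<theta> r i \<le> M" unfolding M_def using r by (intro Max_ge) auto
    then show ?thesis by (simp add: mult_right_mono)
  next
    case False
    have "\<xi> r \<in> base_polytope N (F r)" "y r \<in> base_polytope N (F r)" "F r {} = 0"
      using \<xi> y_base submodular r unfolding prod_base_def by blast+
    then have "\<xi> r i = 0" "y r i = 0" using base_polytope_nonincident_eq_0[OF _ i _ False] by blast+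
    then show ?thesis by simp
  qed
  then have "(\<Sum>r\<in>{1..R}. \<theta> r i * (\<xi> r i - y r i)^2) \<le> M * (\<Sum>r\<in>{1..R}. (\<xi> r i - y r i)^2)"
    unfolding sum_distrib_left by (intro sum_mono) auto
  also have "\<dots> \<le> M * (2 * budget^2)"
    using balanced incident_weight_pos[of i N R F \<theta>] i cover \<theta>_pos unfolding M_def
    by (intro mult_left_mono sum_power2_le_parts) auto
  finally show ?thesis unfolding M_def .
qed

lemma norm2theta_le:
  fixes \<theta> :: "nat \<Rightarrow> nat \<Rightarrow> real"
  assumes cover: "\<forall>i\<in>{1..N}. \<exists>r\<in>{1..R}. incident N (F r) i"
    and \<theta>_pos: "\<forall>r\<in>{1..R}. \<forall>i\<in>{1..N}. \<theta> r i > 0"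
    and \<xi>: "\<xi> \<in> prod_base N R F"
    and balanced: "\<forall>i\<in>{1..N}. (\<Sum>r\<in>{1..R}. pos_part (\<xi> r i - y r i)) \<le> budget
                            \<and> (\<Sum>r\<in>{1..R}. neg_part (\<xi> r i - y r i)) \<le> budget"
  shows "norm2theta N R \<theta> (\<lambda>r i. \<xi> r i - y r i)
           \<le> sqrt (norm1inf N R F \<theta> / 2) * norm1 N (\<lambda>i. opA R y i - z i)"
proof -
  let ?M = "\<lambda>i. Max {\<theta> r i | r. r \<in> {1..R} \<and> incident N (F r) i}"
  have "(norm2theta N R \<theta> (\<lambda>r i. \<xi> r i - y r i))^2
      = (\<Sum>r\<in>{1..R}. \<Sum>i\<in>{1..N}. \<theta> r i * (\<xi> r i - y r i)^2)"
    using \<theta>_pos by (intro norm2theta_power2) (auto simp: less_imp_le)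
  also have "\<dots> = (\<Sum>i\<in>{1..N}. \<Sum>r\<in>{1..R}. \<theta> r i * (\<xi> r i - y r i)^2)" by (rule sum.swap)
  also have "\<dots> \<le> (\<Sum>i\<in>{1..N}. ?M i * (2 * budget^2))"
    using cover \<theta>_pos \<xi> balanced by (intro sum_mono weighted_sum_power2_le) auto
  also have "\<dots> = (\<Sum>i\<in>{1..N}. ?M i) * (2 * budget^2)" by (rule sum_distrib_right[symmetric])
  also have "\<dots> = norm1inf N R F \<theta> / 2 * (norm1 N (\<lambda>i. opA R y i - z i))^2"
    unfolding norm1inf_def norm1_gap_eq by (simp add: power2_eq_square)
  finally have "norm2theta N R \<theta> (\<lambda>r i. \<xi> r i - y r i)
      \<le> sqrt (norm1inf N R F \<theta> / 2 * (norm1 N (\<lambda>i. opA R y i - z i))^2)"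
    by (rule real_le_rsqrt)
  also have "\<dots> = sqrt (norm1inf N R F \<theta> / 2) * norm1 N (\<lambda>i. opA R y i - z i)"
    unfolding real_sqrt_mult by (simp add: norm1_def sum_nonneg)
  finally show ?thesis .
qed

end

theorem lemma3p1:
  fixes N R :: nat
    and F :: "nat \<Rightarrow> nat set \<Rightarrow> real"
    and \<theta> y :: "nat \<Rightarrow> nat \<Rightarrow> real"
    and w z :: "nat \<Rightarrow> real"
  assumes "N > 0" and "R > 0"
    and sub: "\<forall>r\<in>{1..R}. submodular_on N (F r) \<and> F r {} = 0"
    and cover: "\<forall>i\<in>{1..N}. \<exists>r\<in>{1..R}. incident N (F r) i"
    and theta_pos: "\<forall>r\<in>{1..R}. \<forall>i\<in>{1..N}. \<theta> r i > 0"
    and w_pos: "\<forall>i\<in>{1..N}. w i > 0"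
    and y: "y \<in> prod_base N R F"
    and z: "z \<in> base_polytope N (\<lambda>S. \<Sum>r\<in>{1..R}. F r S)"
  shows "\<exists>\<xi>\<in>prod_base N R F.
           (\<forall>i\<in>{1..N}. opA R \<xi> i = z i)
         \<and> norm2theta N R \<theta> (\<lambda>r i. \<xi> r i - y r i)
             \<le> sqrt (norm1inf N R F \<theta> / 2) * norm1 N (\<lambda>i. opA R y i - z i)
         \<and> norm2theta N R \<theta> (\<lambda>r i. \<xi> r i - y r i)
             \<le> sqrt (norm1inf N R F \<theta> * norm1 N (\<lambda>i. inverse (w i)) / 2)
                * norm2w N w (\<lambda>i. opA R y i - z i)"
proof -
  interpret base_decomposition N R F y z using sub y z by unfold_locales
  obtain \<xi> where \<xi>: "\<xi> \<in> prod_base N R F" "\<forall>i\<in>{1..N}. opA R \<xi> i = z i"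
    and balanced: "\<forall>i\<in>{1..N}. (\<Sum>r\<in>{1..R}. pos_part (\<xi> r i - y r i)) \<le> budget
                            \<and> (\<Sum>r\<in>{1..R}. neg_part (\<xi> r i - y r i)) \<le> budget"
    by (rule exists_balanced_decomposition)
  have first: "norm2theta N R \<theta> (\<lambda>r i. \<xi> r i - y r i)
      \<le> sqrt (norm1inf N R F \<theta> / 2) * norm1 N (\<lambda>i. opA R y i - z i)"
    by (rule norm2theta_le[OF cover theta_pos \<xi>(1) balanced])
  also have "\<dots> \<le> sqrt (norm1inf N R F \<theta> / 2)
                   * (sqrt (norm1 N (\<lambda>i. inverse (w i))) * norm2w N w (\<lambda>i. opA R y i - z i))"
    using norm1inf_nonneg[OF cover theta_pos] by (intro mult_left_mono norm1_le_norm2w w_pos) simp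
  also have "\<dots> = sqrt (norm1inf N R F \<theta> * norm1 N (\<lambda>i. inverse (w i)) / 2)
                   * norm2w N w (\<lambda>i. opA R y i - z i)"
    by (simp add: real_sqrt_mult[symmetric] ac_simps)
  finally show ?thesis using \<xi> first by blast
qed

end
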